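(* For any random variable $X$ with values in a finite set $\mathcal{X}$, any $\delta\ge 0$ and any real $k$, $$\mathrm{H}^{\delta}_\infty(X)\ge k\iff\sum_{x\in\mathcal{X}}\max\left(P_X(x)-2^{-k},0\right)\le\delta.$$
   Context: $P_X(x)=\Pr[X=x]$. Min-entropy: $\mathrm{H}_\infty(Y)=-\log_2\max_y P_Y(y)$. The statistical distance of finitely supported distributions $X,Y$ is $d_1(X;Y)=\frac12\sum_z|P_X(z)-P_Y(z)|$ (sum over the union of supports). Smooth min-entropy: $\mathrm{H}^{\delta}_\infty(X)=\max\{\mathrm{H}_\infty(Y): Y \text{ finitely supported},\ d_1(X;Y)\le\delta\}$. *)

theory Defs
  imports "HOL-Probability.Probability_Mass_Function" "HOL-Library.Extended_Real"
begin

definition min_entropy :: "'a pmf \<Rightarrow> real" where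
  "min_entropy Y = - log 2 (Max (pmf Y ` set_pmf Y))"

definition stat_dist :: "'a pmf \<Rightarrow> 'a pmf \<Rightarrow> real" where
  "stat_dist X Y = (1/2) * (\<Sum>z \<in> set_pmf X \<union> set_pmf Y. \<bar>pmf X z - pmf Y z\<bar>)"

text \<open>Smooth min-entropy: the maximum (taken as supremum in the extended reals, so it is
  \<infinity> if unbounded) of min-entropies of finitely supported Y within distance delta.\<close>
definition smooth_min_entropy :: "real \<Rightarrow> 'a pmf \<Rightarrow> ereal" where
  "smooth_min_entropy \<delta> X =
     Sup {ereal (min_entropy Y) | Y. finite (set_pmf Y) \<and> stat_dist X Y \<le> \<delta>}"

end

theory Submission
  imports Defs
begin

text \<open>Write \<open>P\<^sub>X\<close> for the pmf of \<open>X\<close>, \<open>s = 2\<^sup>-\<^sup>k\<close>, and call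
  \<open>\<Sum>\<^sub>x max (P\<^sub>X(x) - s) 0\<close> the excess mass of \<open>X\<close> above \<open>s\<close>.
  A finitely supported \<open>Y\<close> has min-entropy at least \<open>k\<close> iff \<open>P\<^sub>Y \<le> s\<close> everywhere, and then
  \<open>d\<^sub>1(X;Y) = \<Sum>\<^sub>z max (P\<^sub>X(z) - P\<^sub>Y(z)) 0\<close> is at least the excess mass above \<open>s\<close>.
  portions \<open>\<le> s\<close> over fresh points, which exist because the ambient type is infinite.
  Since the supremum defining the smooth min-entropy need not be attained, the forward
  direction only yields the bound for every level above \<open>s\<close>; continuity of the excess
  mass in the level closes the gap.\<close>

definition max_pmf :: "'a pmf \<Rightarrow> real" where
  "max_pmf Y = Max (pmf Y ` set_pmf Y)"

definition excess_mass :: "'a pmf \<Rightarrow> 'a set \<Rightarrow> real \<Rightarrow> real" where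
  "excess_mass X A s = (\<Sum>x\<in>A. max (pmf X x - s) 0)"

lemma max_pmf_pos:
  assumes "finite (set_pmf Y)"
  shows "0 < max_pmf Y"
proof -
  obtain y where y: "y \<in> set_pmf Y" using set_pmf_not_empty[of Y] by blast
  then have "0 < pmf Y y" by (simp add: pmf_positive)
  also have "pmf Y y \<le> max_pmf Y" using assms y by (simp add: max_pmf_def)
  finally show ?thesis .
qed

lemma pmf_le_max_pmf:
  assumes "finite (set_pmf Y)"
  shows "pmf Y x \<le> max_pmf Y"
  using assms max_pmf_pos[OF assms]
  by (cases "x \<in> set_pmf Y") (auto simp: max_pmf_def set_pmf_iff)

lemma max_pmf_le_iff:
  assumes "finite (set_pmf Y)"
  shows "max_pmf Y \<le> s \<longleftrightarrow> (\<forall>x. pmf Y x \<le> s)"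
proof
  assume "max_pmf Y \<le> s"
  then show "\<forall>x. pmf Y x \<le> s" using pmf_le_max_pmf[OF assms] order_trans by blast
next
  assume "\<forall>x. pmf Y x \<le> s"
  then show "max_pmf Y \<le> s"
    using assms set_pmf_not_empty[of Y] by (simp add: max_pmf_def)
qed

lemma min_entropy_ge_iff:
  assumes "finite (set_pmf Y)"
  shows "k \<le> min_entropy Y \<longleftrightarrow> max_pmf Y \<le> 2 powr (-k)"
proof -
  have "k \<le> min_entropy Y \<longleftrightarrow> log 2 (max_pmf Y) \<le> log 2 (2 powr (-k))"
    by (auto simp: min_entropy_def max_pmf_def)
  also have "\<dots> \<longleftrightarrow> max_pmf Y \<le> 2 powr (-k)"
    using max_pmf_pos[OF assms] by (subst log_le_cancel_iff) auto
  finally show ?thesis .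
qed

lemma min_entropy_gt_iff:
  assumes "finite (set_pmf Y)"
  shows "k < min_entropy Y \<longleftrightarrow> max_pmf Y < 2 powr (-k)"
proof -
  have "k < min_entropy Y \<longleftrightarrow> log 2 (max_pmf Y) < log 2 (2 powr (-k))"
    by (auto simp: min_entropy_def max_pmf_def)
  also have "\<dots> \<longleftrightarrow> max_pmf Y < 2 powr (-k)"
    using max_pmf_pos[OF assms] by (subst log_less_cancel_iff) auto
  finally show ?thesis .
qed

lemma stat_dist_eq_sum_pos_part:
  assumes "finite T" "set_pmf X \<union> set_pmf Y \<subseteq> T"
  shows "stat_dist X Y = (\<Sum>z\<in>T. max (pmf X z - pmf Y z) 0)"
proof -
  have "(\<Sum>z\<in>set_pmf X \<union> set_pmf Y. \<bar>pmf X z - pmf Y z\<bar>) = (\<Sum>z\<in>T. \<bar>pmf X z - pmf Y z\<bar>)"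
    by (rule sum.mono_neutral_left) (use assms in \<open>auto simp: set_pmf_iff\<close>)
  also have "\<dots> = (\<Sum>z\<in>T. 2 * max (pmf X z - pmf Y z) 0 - (pmf X z - pmf Y z))"
    by (rule sum.cong) (auto simp: max_def)
  \<comment> \<open>the signed differences sum to \<open>1 - 1 = 0\<close>\<close>
  also have "\<dots> = 2 * (\<Sum>z\<in>T. max (pmf X z - pmf Y z) 0)"
    using assms sum_pmf_eq_1[of T X] sum_pmf_eq_1[of T Y]
    by (simp add: sum_subtractf sum_distrib_left)
  finally show ?thesis by (simp add: stat_dist_def)
qed

lemma excess_mass_antimono: "s \<le> t \<Longrightarrow> excess_mass X A t \<le> excess_mass X A s"
  unfolding excess_mass_def by (rule sum_mono) auto

lemma excess_mass_le_stat_dist: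
  assumes "finite A" "set_pmf X \<subseteq> A" "finite (set_pmf Y)"
  shows "excess_mass X A (max_pmf Y) \<le> stat_dist X Y"
proof -
  have "excess_mass X A (max_pmf Y) \<le> (\<Sum>z\<in>A. max (pmf X z - pmf Y z) 0)"
    unfolding excess_mass_def
    by (intro sum_mono max.mono) (auto intro: pmf_le_max_pmf[OF assms(3)])
  also have "\<dots> \<le> (\<Sum>z\<in>A \<union> set_pmf Y. max (pmf X z - pmf Y z) 0)"
    by (rule sum_mono2) (use assms in auto)
  also have "\<dots> = stat_dist X Y"
    by (rule stat_dist_eq_sum_pos_part[symmetric]) (use assms in auto)
  finally show ?thesis .
qed

lemma sum_min_pmf_eq:
  assumes "finite A" "set_pmf X \<subseteq> A"
  shows "(\<Sum>x\<in>A. min (pmf X x) s) = 1 - excess_mass X A s"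
proof -
  have "(\<Sum>x\<in>A. min (pmf X x) s) = (\<Sum>x\<in>A. pmf X x - max (pmf X x - s) 0)"
    by (rule sum.cong) auto
  then show ?thesis
    using sum_pmf_eq_1[OF assms] by (simp add: excess_mass_def sum_subtractf)
qed

lemma pmf_embed_pmf_finite:
  assumes "finite S" "\<And>x. 0 \<le> g x" "\<And>x. x \<notin> S \<Longrightarrow> g x = 0" "(\<Sum>x\<in>S. g x) = 1"
  shows "pmf (embed_pmf g) x = g x"
proof (rule pmf_embed_pmf)
  have "(\<integral>\<^sup>+x. ennreal (g x) \<partial>count_space UNIV) = (\<Sum>x\<in>S. ennreal (g x))"
    by (rule nn_integral_count_space') (use assms in auto)
  also have "\<dots> = 1"
    using assms by (simp add: sum_ennreal)
  finally show "(\<integral>\<^sup>+x. ennreal (g x) \<partial>count_space UNIV) = 1" .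
qed (use assms in auto)

lemma exists_pmf_capped:
  assumes "infinite (UNIV :: 'a set)" "finite A" "set_pmf X \<subseteq> A" "0 < s"
  obtains Y :: "'a pmf"
  where "finite (set_pmf Y)" "max_pmf Y \<le> s" "stat_dist X Y \<le> excess_mass X A s"
proof -
  define r where "r = excess_mass X A s"
  have "0 \<le> r" unfolding r_def excess_mass_def by (rule sum_nonneg) auto
  obtain n :: nat where "r / s < real n" using reals_Archimedean2 by blast
  then have "r / real (Suc n) \<le> s"
    using \<open>0 < s\<close> \<open>0 \<le> r\<close> by (simp add: field_simps)
  obtain F where F: "finite F" "card F = Suc n" "A \<inter> F = {}"
    using finite_arbitrarily_large_disj[OF assms(1,2)] by blast
  define g where "g x = (if x \<in> A then min (pmf X x) s else if x \<in> F then r / card F else 0)" for x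
  have "(\<Sum>x\<in>A. g x) = 1 - r"
    unfolding r_def g_def using sum_min_pmf_eq[OF assms(2,3)] by simp
  moreover have "(\<Sum>x\<in>F. g x) = (\<Sum>x\<in>F. r / card F)"
    using F by (intro sum.cong) (auto simp: g_def)
  then have "(\<Sum>x\<in>F. g x) = r"
    using F by simp
  ultimately have "(\<Sum>x\<in>A \<union> F. g x) = 1"
    using F assms(2) by (simp add: sum.union_disjoint)
  define Y where "Y = embed_pmf g"
  have pmf_Y: "pmf Y x = g x" for x
    unfolding Y_def using \<open>(\<Sum>x\<in>A \<union> F. g x) = 1\<close> F assms(2,4) \<open>0 \<le> r\<close>
    by (intro pmf_embed_pmf_finite[of "A \<union> F"]) (auto simp: g_def)
  have set_Y: "set_pmf Y \<subseteq> A \<union> F"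
    by (auto simp: set_pmf_iff pmf_Y g_def split: if_splits)
  then have fin: "finite (set_pmf Y)" using F assms(2) finite_subset by blast
  have max_Y: "max_pmf Y \<le> s"
    unfolding max_pmf_le_iff[OF fin] using \<open>r / real (Suc n) \<le> s\<close> \<open>0 < s\<close> F
    by (auto simp: pmf_Y g_def)
  have pmf_X_outside: "pmf X x = 0" if "x \<notin> A" for x
    using that assms(3) by (auto simp: set_pmf_iff)
  have "stat_dist X Y = (\<Sum>z\<in>A \<union> F. max (pmf X z - pmf Y z) 0)"
    by (rule stat_dist_eq_sum_pos_part) (use F assms(2,3) set_Y in auto)
  also have "\<dots> = (\<Sum>z\<in>A. max (pmf X z - pmf Y z) 0)"
    using F assms(2) \<open>0 \<le> r\<close>
    by (intro sum.mono_neutral_right) (auto simp: pmf_X_outside pmf_Y g_def)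
  also have "\<dots> = excess_mass X A s"
    unfolding excess_mass_def by (rule sum.cong) (auto simp: pmf_Y g_def)
  finally show ?thesis using that fin max_Y by simp
qed

lemma excess_mass_le_of_gt:
  assumes "\<And>t. s < t \<Longrightarrow> excess_mass X A t \<le> \<delta>"
  shows "excess_mass X A s \<le> \<delta>"
proof (rule tendsto_upperbound)
  have "isCont (excess_mass X A) s"
    unfolding excess_mass_def by (intro continuous_intros)
  then show "(excess_mass X A \<longlongrightarrow> excess_mass X A s) (at_right s)"
    by (simp add: isCont_def filterlim_at_split)
  show "\<forall>\<^sub>F t in at_right s. excess_mass X A t \<le> \<delta>"
    using eventually_at_right_less by (rule eventually_mono) (rule assms)
qed simp

lemma smooth_min_entropy_geI:
  assumes "finite (set_pmf Y)" "stat_dist X Y \<le> \<delta>" "k \<le> min_entropy Y"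
  shows "ereal k \<le> smooth_min_entropy \<delta> X"
proof -
  have "ereal k \<le> ereal (min_entropy Y)" using assms(3) by simp
  also have "\<dots> \<le> smooth_min_entropy \<delta> X"
    unfolding smooth_min_entropy_def using assms(1,2) by (auto intro: Sup_upper)
  finally show ?thesis .
qed

lemma smooth_min_entropy_geE:
  assumes "ereal k \<le> smooth_min_entropy \<delta> X" "k' < k"
  obtains Y where "finite (set_pmf Y)" "stat_dist X Y \<le> \<delta>" "k' < min_entropy Y"
proof -
  have "ereal k' < ereal k" using assms(2) by simp
  also have "\<dots> \<le> Sup {ereal (min_entropy Y) | Y. finite (set_pmf Y) \<and> stat_dist X Y \<le> \<delta>}"
    using assms(1) by (simp add: smooth_min_entropy_def)
  finally have "ereal k' < \<dots>" .
  then show ?thesis using that by (auto simp: less_Sup_iff)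
qed

lemma excess_mass_le_if_smooth_min_entropy_ge:
  assumes "finite A" "set_pmf X \<subseteq> A" "ereal k \<le> smooth_min_entropy \<delta> X"
  shows "excess_mass X A (2 powr (-k)) \<le> \<delta>"
proof (rule excess_mass_le_of_gt)
  fix t assume "2 powr (-k) < t"
  moreover have "0 < 2 powr (-k)" by simp
  ultimately have "0 < t" by linarith
  with \<open>2 powr (-k) < t\<close> have "- k < log 2 t" by (simp add: less_log_iff)
  then have "- log 2 t < k" by linarith
  then obtain Y where Y: "finite (set_pmf Y)" "stat_dist X Y \<le> \<delta>" "- log 2 t < min_entropy Y"
    using smooth_min_entropy_geE[OF assms(3)] by blast
  then have "max_pmf Y \<le> t"
    using \<open>0 < t\<close> by (simp add: min_entropy_gt_iff)
  then have "excess_mass X A t \<le> excess_mass X A (max_pmf Y)"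
    by (rule excess_mass_antimono)
  also have "\<dots> \<le> stat_dist X Y"
    using assms(1,2) Y(1) by (rule excess_mass_le_stat_dist)
  finally show "excess_mass X A t \<le> \<delta>" using Y(2) by simp
qed

theorem lemma5:
  fixes X :: "'a pmf" and \<X> :: "'a set" and \<delta> k :: real
  assumes "infinite (UNIV :: 'a set)" and "finite \<X>" and "set_pmf X \<subseteq> \<X>" and "\<delta> \<ge> 0"
  shows "smooth_min_entropy \<delta> X \<ge> ereal k \<longleftrightarrow>
         (\<Sum>x\<in>\<X>. max (pmf X x - 2 powr (-k)) 0) \<le> \<delta>"
proof -
  have "ereal k \<le> smooth_min_entropy \<delta> X" if "excess_mass X \<X> (2 powr (-k)) \<le> \<delta>"
  proof -
    obtain Y where "finite (set_pmf Y)" "max_pmf Y \<le> 2 powr (-k)"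
      "stat_dist X Y \<le> excess_mass X \<X> (2 powr (-k))"
      using exists_pmf_capped[OF assms(1-3), of "2 powr (-k)"] by auto
    with that show ?thesis
      by (intro smooth_min_entropy_geI[of Y]) (auto simp: min_entropy_ge_iff)
  qed
  then show ?thesis
    using excess_mass_le_if_smooth_min_entropy_ge[OF assms(2,3)] by (auto simp: excess_mass_def)
qed

end
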